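(* Let $p$ be a prime and let $G$ be a group of order $p^7$ and nilpotency class $4$ such that $\gamma_2(G)$ is elementary abelian of order $p^5$. Then $\operatorname{Z}(G) = \gamma_4(G)$, and this subgroup has order $p^2$.
   Context: $\gamma_i(G)$ denotes the $i$-th term of the lower central series of $G$ and $\operatorname{Z}(G)$ its center. *)

theory Defs
  imports "HOL-Algebra.Algebra"
begin

definition commutator_subgroup :: "('a, 'b) monoid_scheme \<Rightarrow> 'a set \<Rightarrow> 'a set \<Rightarrow> 'a set" where
  "commutator_subgroup G H K = generate G
     (\<Union>h \<in> H. \<Union>k \<in> K. { h \<otimes>\<^bsub>G\<^esub> k \<otimes>\<^bsub>G\<^esub> inv\<^bsub>G\<^esub> h \<otimes>\<^bsub>G\<^esub> inv\<^bsub>G\<^esub> k })"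

text \<open>Lower central series, indexed from 1: gamma G 1 = G, gamma G (i+1) = [gamma G i, G].
  The index 0 is a dummy and also set to G.\<close>
fun lower_central :: "('a, 'b) monoid_scheme \<Rightarrow> nat \<Rightarrow> 'a set" where
  "lower_central G 0 = carrier G"
| "lower_central G (Suc 0) = carrier G"
| "lower_central G (Suc (Suc n)) = commutator_subgroup G (lower_central G (Suc n)) (carrier G)"

definition group_center :: "('a, 'b) monoid_scheme \<Rightarrow> 'a set" where
  "group_center G = {z \<in> carrier G. \<forall>g \<in> carrier G. z \<otimes>\<^bsub>G\<^esub> g = g \<otimes>\<^bsub>G\<^esub> z}"

definition nilpotency_class :: "('a, 'b) monoid_scheme \<Rightarrow> nat \<Rightarrow> bool" where
  "nilpotency_class G c \<longleftrightarrow> lower_central G (Suc c) = {\<one>\<^bsub>G\<^esub>}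
      \<and> (\<forall>k. 1 \<le> k \<and> k \<le> c \<longrightarrow> lower_central G k \<noteq> {\<one>\<^bsub>G\<^esub>})"

definition elementary_abelian :: "('a, 'b) monoid_scheme \<Rightarrow> nat \<Rightarrow> 'a set \<Rightarrow> bool" where
  "elementary_abelian G p H \<longleftrightarrow> subgroup H G \<and> comm_group (G\<lparr>carrier := H\<rparr>)
      \<and> (\<forall>x \<in> H. x [^]\<^bsub>G\<^esub> p = \<one>\<^bsub>G\<^esub>)"

end

theory Submission
  imports Defs
begin

(*
  Pick a, b with G = <a, b, gamma_2>: the quotient G/gamma_2 has order p^2 and is not cyclic, for
  otherwise gamma_2 = gamma_3. As gamma_2 is abelian and normal, n |-> [n, x] is a homomorphism
  on gamma_2, so generators of gamma_k modulo gamma_(k+1) give generators of gamma_(k+1) modulo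
  gamma_(k+2) by commutation with a and b:
    gamma_2 = <[a,b]> gamma_3,  gamma_3 = <[a,b,a], [a,b,b]> gamma_4,
    gamma_4 = <[a,b,a,a], [a,b,a,b], [a,b,b,b]>,  using [a,b,b,a] = [a,b,a,b].
  Counting gives |gamma_3| = p^4 and |gamma_4| in {p^2, p^3}; if |gamma_4| = p^3, then
  gamma_3 = <d> gamma_4 for a single d, forcing |gamma_4| <= p^2. As gamma_5 = 1, gamma_4 is
  central.
  Conversely, a central z lies in gamma_2 (else G = <z, w, gamma_2> and again gamma_2 = gamma_3),
  then in gamma_3 (else [a,b,a] and [a,b,b] lie in gamma_4), so z = [a,b,a]^i [a,b,b]^j modulo
  gamma_4. Commuting z with a and b gives U^i V^j = V^i W^j = 1 for the generators U, V, W of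
  gamma_4 above; unless p divides i and j this makes gamma_4 cyclic, contradicting |gamma_4| = p^2.
*)

declare lower_central.simps(3) [simp del]

section \<open>Commutators and the lower central series\<close>

definition commutator :: "('a, 'b) monoid_scheme \<Rightarrow> 'a \<Rightarrow> 'a \<Rightarrow> 'a" where
  "commutator G x y = x \<otimes>\<^bsub>G\<^esub> y \<otimes>\<^bsub>G\<^esub> inv\<^bsub>G\<^esub> x \<otimes>\<^bsub>G\<^esub> inv\<^bsub>G\<^esub> y"

context group
begin

lemma inv_m_cancel_left [simp]: "x \<in> carrier G \<Longrightarrow> y \<in> carrier G \<Longrightarrow> inv x \<otimes> (x \<otimes> y) = y"
  by (simp add: m_assoc [symmetric])

lemma commutator_closed [simp]:
  "x \<in> carrier G \<Longrightarrow> y \<in> carrier G \<Longrightarrow> commutator G x y \<in> carrier G"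
  by (simp add: commutator_def)

lemma inv_commutator:
  "x \<in> carrier G \<Longrightarrow> y \<in> carrier G \<Longrightarrow> inv (commutator G x y) = commutator G y x"
  by (simp add: commutator_def m_assoc inv_mult_group)

lemma commutator_one_left [simp]: "x \<in> carrier G \<Longrightarrow> commutator G \<one> x = \<one>"
  by (simp add: commutator_def)

lemma commutator_one_right [simp]: "x \<in> carrier G \<Longrightarrow> commutator G x \<one> = \<one>"
  by (simp add: commutator_def)

lemma commutator_self [simp]: "x \<in> carrier G \<Longrightarrow> commutator G x x = \<one>"
  by (simp add: commutator_def m_assoc)

lemma commutator_eq_one_iff:
  assumes "x \<in> carrier G" "y \<in> carrier G"
  shows "commutator G x y = \<one> \<longleftrightarrow> x \<otimes> y = y \<otimes> x"
proof -
  have "commutator G x y = (x \<otimes> y) \<otimes> inv (y \<otimes> x)"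
    using assms by (simp add: commutator_def m_assoc inv_mult_group)
  then show ?thesis
    using assms by (metis inv_closed inv_inv m_closed r_inv inv_equality)
qed

lemma commutator_center_left:
  "z \<in> group_center G \<Longrightarrow> x \<in> carrier G \<Longrightarrow> commutator G z x = \<one>"
  unfolding group_center_def by (simp add: commutator_eq_one_iff)

lemma conj_eq_inv_commutator_mult:
  "s \<in> carrier G \<Longrightarrow> g \<in> carrier G \<Longrightarrow> g \<otimes> s \<otimes> inv g = inv (commutator G s g) \<otimes> s"
  by (simp add: commutator_def m_assoc inv_mult_group)

lemma commutator_mult_right:
  "n \<in> carrier G \<Longrightarrow> h \<in> carrier G \<Longrightarrow> k \<in> carrier G \<Longrightarrow>
   commutator G n (h \<otimes> k) = commutator G n h \<otimes> (h \<otimes> commutator G n k \<otimes> inv h)"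
  by (simp add: commutator_def m_assoc inv_mult_group)

lemma commutator_inv_right:
  "n \<in> carrier G \<Longrightarrow> h \<in> carrier G \<Longrightarrow>
   commutator G n (inv h) = inv h \<otimes> inv (commutator G n h) \<otimes> h"
  by (simp add: commutator_def m_assoc inv_mult_group)

lemma normal_if_commutator_closed:
  assumes S: "subgroup S G" and comm: "\<And>s g. s \<in> S \<Longrightarrow> g \<in> carrier G \<Longrightarrow> commutator G s g \<in> S"
  shows "S \<lhd> G"
  unfolding normal_inv_iff
proof (intro conjI S ballI)
  fix g s assume g: "g \<in> carrier G" and s: "s \<in> S"
  have "s \<in> carrier G" using S s subgroup.mem_carrier by metis
  then show "g \<otimes> s \<otimes> inv g \<in> S"
    using conj_eq_inv_commutator_mult g s comm S
    by (simp add: subgroup.m_closed subgroup.m_inv_closed)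
qed

lemma commutator_mem_if_generators:
  assumes S: "S \<lhd> G" and gens: "gens \<subseteq> carrier G" "generate G gens = carrier G"
    and n: "n \<in> carrier G"
    and n_gens: "\<And>x. x \<in> gens \<Longrightarrow> commutator G n x \<in> S" and g: "g \<in> carrier G"
  shows "commutator G n g \<in> S"
proof -
  interpret S: normal S G by (rule S)
  let ?D = "{h \<in> carrier G. commutator G n h \<in> S}"
  have "subgroup ?D G"
  proof (rule subgroupI)
    have "\<one> \<in> ?D" using n by simp
    then show "?D \<noteq> {}" by blast
  next
    fix h assume h: "h \<in> ?D"
    have "inv h \<otimes> inv (commutator G n h) \<otimes> h \<in> S"
      using h n by (intro S.inv_op_closed1) auto
    then show "inv h \<in> ?D" using h n by (simp add: commutator_inv_right)
  next
    fix h k assume h: "h \<in> ?D" and k: "k \<in> ?D"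
    have "commutator G n h \<otimes> (h \<otimes> commutator G n k \<otimes> inv h) \<in> S"
      using h k n by (intro S.m_closed S.inv_op_closed2) auto
    then show "h \<otimes> k \<in> ?D" using h k n by (simp add: commutator_mult_right)
  qed blast
  then have "generate G gens \<subseteq> ?D"
    by (rule generate_subgroup_incl[rotated]) (use n_gens gens in blast)
  then show ?thesis using gens g by blast
qed

lemma commutators_mem_if_generators:
  assumes S: "S \<lhd> G" and gens: "gens \<subseteq> carrier G" "generate G gens = carrier G"
    and gens_comm: "\<And>x y. x \<in> gens \<Longrightarrow> y \<in> gens \<Longrightarrow> commutator G x y \<in> S"
    and g: "g \<in> carrier G" and h: "h \<in> carrier G"
  shows "commutator G g h \<in> S"
proof -
  have left: "commutator G x k \<in> S" if "x \<in> gens" "k \<in> carrier G" for x k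
    using commutator_mem_if_generators[OF S gens] that gens gens_comm by auto
  have right: "commutator G k x \<in> S" if x: "x \<in> gens" and k: "k \<in> carrier G" for x k
  proof -
    have "x \<in> carrier G" using x gens by blast
    then have "commutator G k x = inv (commutator G x k)" using k by (simp add: inv_commutator)
    then show ?thesis using subgroup.m_inv_closed[OF normal_imp_subgroup[OF S] left[OF x k]] by simp
  qed
  show ?thesis by (rule commutator_mem_if_generators[OF S gens g _ h]) (rule right[OF _ g])
qed

lemma commutator_subgroup_eq:
  "commutator_subgroup G H K = generate G {commutator G h k | h k. h \<in> H \<and> k \<in> K}"
  unfolding commutator_subgroup_def commutator_def by (rule arg_cong[where f = "generate G"]) auto

lemma lower_central_Suc_Suc:
  "lower_central G (Suc (Suc n)) =
     generate G {commutator G h g | h g. h \<in> lower_central G (Suc n) \<and> g \<in> carrier G}"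
  by (simp add: lower_central.simps(3) commutator_subgroup_eq)

lemma lower_central_subset_carrier: "lower_central G n \<subseteq> carrier G"
proof (induction n)
  case (Suc n)
  then show ?case
    by (cases n) (auto simp: lower_central_Suc_Suc intro!: generate_incl)
qed simp

lemma subgroup_lower_central: "subgroup (lower_central G n) G"
proof (cases n)
  case (Suc m)
  show ?thesis
  proof (cases m)
    case (Suc k)
    have "{commutator G h g | h g. h \<in> lower_central G (Suc k) \<and> g \<in> carrier G} \<subseteq> carrier G"
      using lower_central_subset_carrier[of "Suc k"] by (auto intro!: commutator_closed)
    then show ?thesis
      using \<open>n = Suc m\<close> Suc by (simp add: lower_central_Suc_Suc generate_is_subgroup)
  qed (simp add: \<open>n = Suc m\<close> subgroup_self)
qed (simp add: subgroup_self)

lemma commutator_mem_lower_central: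
  "h \<in> lower_central G (Suc n) \<Longrightarrow> g \<in> carrier G \<Longrightarrow>
   commutator G h g \<in> lower_central G (Suc (Suc n))"
  unfolding lower_central_Suc_Suc by (blast intro: generate.incl)

lemma lower_central_least:
  assumes "subgroup S G"
    and "\<And>h g. h \<in> lower_central G (Suc n) \<Longrightarrow> g \<in> carrier G \<Longrightarrow> commutator G h g \<in> S"
  shows "lower_central G (Suc (Suc n)) \<subseteq> S"
  unfolding lower_central_Suc_Suc by (rule generate_subgroup_incl) (use assms in auto)

lemma lower_central_Suc_subset: "lower_central G (Suc n) \<subseteq> lower_central G n"
proof (induction n)
  case (Suc n)
  show ?case
  proof (cases n)
    case 0
    then show ?thesis using lower_central_subset_carrier by simp
  next
    case (Suc m)
    show ?thesis
      by (rule lower_central_least[OF subgroup_lower_central])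
        (use Suc.IH \<open>n = Suc m\<close> commutator_mem_lower_central in auto)
  qed
qed simp

lemma lower_central_antimono: "m \<le> n \<Longrightarrow> lower_central G n \<subseteq> lower_central G m"
  by (induction n rule: dec_induct) (use lower_central_Suc_subset in blast)+

lemma normal_lower_central: "lower_central G n \<lhd> G"
proof (rule normal_if_commutator_closed[OF subgroup_lower_central])
  fix s g assume "s \<in> lower_central G n" "g \<in> carrier G"
  then show "commutator G s g \<in> lower_central G n"
    by (cases n) (auto intro: subsetD[OF lower_central_Suc_subset] commutator_mem_lower_central)
qed

lemma normal_if_between_lower_central:
  assumes "subgroup S G" "lower_central G (Suc (Suc n)) \<subseteq> S" "S \<subseteq> lower_central G (Suc n)"
  shows "S \<lhd> G"
  using assms commutator_mem_lower_central by (intro normal_if_commutator_closed) blast+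

lemma lower_central_subset_if_generators:
  assumes gens: "gens \<subseteq> carrier G" "generate G gens = carrier G" and S: "S \<lhd> G"
    and comm: "\<And>h x. h \<in> lower_central G (Suc n) \<Longrightarrow> x \<in> gens \<Longrightarrow> commutator G h x \<in> S"
  shows "lower_central G (Suc (Suc n)) \<subseteq> S"
proof (rule lower_central_least[OF normal_imp_subgroup[OF S]])
  fix h g assume "h \<in> lower_central G (Suc n)" "g \<in> carrier G"
  then show "commutator G h g \<in> S"
    using commutator_mem_if_generators[OF S gens] comm lower_central_subset_carrier by blast
qed

lemma lower_central_stable:
  assumes "lower_central G (Suc (Suc n)) = lower_central G (Suc n)" "Suc n \<le> m"
  shows "lower_central G m = lower_central G (Suc n)"
  using assms(2)
proof (induction m rule: dec_induct)
  case (step m)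
  then obtain k where m: "m = Suc k" by (cases m) auto
  have "lower_central G (Suc m) = commutator_subgroup G (lower_central G m) (carrier G)"
    by (simp add: m lower_central.simps(3))
  also have "\<dots> = lower_central G (Suc (Suc n))"
    by (simp add: step.IH lower_central.simps(3))
  finally show ?case using assms(1) by simp
qed simp

lemma nilpotency_class_lower_central_neq:
  assumes "nilpotency_class G c" "Suc n \<le> c"
  shows "lower_central G (Suc (Suc n)) \<noteq> lower_central G (Suc n)"
proof
  assume "lower_central G (Suc (Suc n)) = lower_central G (Suc n)"
  then have "lower_central G (Suc c) = lower_central G (Suc n)"
    by (rule lower_central_stable) (use assms(2) in simp)
  then show False using assms unfolding nilpotency_class_def by auto
qed

lemma lower_central_2_subsetI:
  assumes a: "a \<in> carrier G" and b: "b \<in> carrier G"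
    and gen: "generate G (insert a (insert b (lower_central G 2))) = carrier G"
    and S: "S \<lhd> G" "lower_central G 3 \<subseteq> S" and ab: "commutator G a b \<in> S"
  shows "lower_central G 2 \<subseteq> S"
proof -
  let ?gens = "insert a (insert b (lower_central G 2))"
  have sub: "subgroup S G" using S(1) by (rule normal_imp_subgroup)
  have gens: "?gens \<subseteq> carrier G" using a b lower_central_subset_carrier by blast
  have left: "commutator G x y \<in> S" if "x \<in> lower_central G 2" "y \<in> carrier G" for x y
    using commutator_mem_lower_central[of x 1 y] that S(2) by (auto simp: eval_nat_numeral)
  have right: "commutator G x y \<in> S" if "x \<in> carrier G" "y \<in> lower_central G 2" for x y
  proof -
    have "y \<in> carrier G" using that(2) lower_central_subset_carrier by blast
    then have "commutator G x y = inv (commutator G y x)" using that(1)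
      by (simp add: inv_commutator)
    then show ?thesis using subgroup.m_inv_closed[OF sub left[OF that(2,1)]] by simp
  qed
  have ba: "commutator G b a \<in> S"
    using subgroup.m_inv_closed[OF sub ab] a b by (simp add: inv_commutator)
  have "commutator G x y \<in> S" if x: "x \<in> ?gens" and y: "y \<in> ?gens" for x y
  proof -
    consider "x \<in> lower_central G 2" | "y \<in> lower_central G 2" | "x \<in> {a, b}" "y \<in> {a, b}"
      using x y by blast
    then show ?thesis
    proof cases
      case 1
      then show ?thesis using left y gens by blast
    next
      case 2
      then show ?thesis using right x gens by blast
    next
      case 3
      then show ?thesis using ab ba a b subgroup.one_closed[OF sub] by auto
    qed
  qed
  then have "commutator G g h \<in> S" if "g \<in> lower_central G (Suc 0)" "h \<in> carrier G" for g h
    using commutators_mem_if_generators[OF S(1) gens gen] that by simp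
  then have "lower_central G (Suc (Suc 0)) \<subseteq> S" by (rule lower_central_least[OF sub])
  then show ?thesis by (simp only: numeral_2_eq_2)
qed

section \<open>Subgroups of finite \<open>p\<close>-groups\<close>

lemma subgroup_nat_pow_closed: "subgroup H G \<Longrightarrow> h \<in> H \<Longrightarrow> h [^] (k::nat) \<in> H"
  by (induction k) (auto simp: subgroup.one_closed subgroup.m_closed)

lemma card_subgroup_dvd:
  assumes "finite (carrier G)" "subgroup H G" "subgroup K G" "H \<subseteq> K"
  shows "card H dvd card K"
proof -
  interpret K: group "G\<lparr>carrier := K\<rparr>" using assms(3) by (rule subgroup_imp_group)
  have "subgroup H (G\<lparr>carrier := K\<rparr>)" using assms(2-4) by (rule subgroup_incl)
  then have "card (rcosets\<^bsub>G\<lparr>carrier := K\<rparr>\<^esub> H) * card H = card K"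
    using K.lagrange by (simp add: order_def)
  then show ?thesis by (metis dvd_triv_right)
qed

lemma card_psubgroup_prime_power:
  assumes fin: "finite (carrier G)" and p: "Factorial_Ring.prime p"
    and H: "subgroup H G" and K: "subgroup K G" and HK: "H \<subset> K" and card_K: "card K = p ^ n"
  shows "\<exists>i<n. card H = p ^ i"
proof -
  obtain i where i: "i \<le> n" "card H = p ^ i"
    using card_subgroup_dvd[OF fin H K] HK card_K divides_primepow_nat[OF p] by auto
  have "finite K" using fin K subgroup.subset finite_subset by blast
  then have "card H < card K" using HK by (rule psubset_card_mono)
  then show ?thesis using i card_K by (metis le_neq_implies_less less_irrefl)
qed

lemma psubgroup_chain_eq_carrier:
  assumes fin: "finite (carrier G)" and p: "Factorial_Ring.prime p"
    and H: "subgroup H G" and L: "subgroup L G" and M: "subgroup M G"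
    and HL: "H \<subset> L" and LM: "L \<subset> M"
    and card_H: "card H = p ^ n" and card_G: "card (carrier G) = p ^ Suc (Suc n)"
  shows "M = carrier G"
proof (rule ccontr)
  assume "M \<noteq> carrier G"
  then have "M \<subset> carrier G" using subgroup.subset[OF M] by blast
  then obtain k where k: "k < Suc (Suc n)" "card M = p ^ k"
    using card_psubgroup_prime_power[OF fin p M subgroup_self _ card_G] by blast
  obtain j where j: "j < k" "card L = p ^ j"
    using card_psubgroup_prime_power[OF fin p L M LM k(2)] by blast
  obtain i where i: "i < j" "card H = p ^ i"
    using card_psubgroup_prime_power[OF fin p H L HL j(2)] by blast
  have "i = n" using i(2) card_H prime_gt_1_nat[OF p] by simp
  then show False using i j k by linarith
qed

lemma generate_insert_eq_if_index_prime:
  assumes fin: "finite (carrier G)" and p: "Factorial_Ring.prime p"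
    and H: "subgroup H G" and K: "subgroup K G" and HK: "H \<subseteq> K"
    and card_K: "card K = p * card H" and d: "d \<in> K" "d \<notin> H"
  shows "generate G (insert d H) = K"
proof -
  let ?L = "generate G (insert d H)"
  have "insert d H \<subseteq> carrier G" using d HK K subgroup.subset by blast
  then have L: "subgroup ?L G" by (rule generate_is_subgroup)
  have HL: "H \<subseteq> ?L" and dL: "d \<in> ?L" by (auto intro: generate.incl)
  have LK: "?L \<subseteq> K" using d HK K by (intro generate_subgroup_incl) auto
  have fin_K: "finite K" using fin K subgroup.subset finite_subset by blast
  obtain q where q: "card ?L = card H * q" using card_subgroup_dvd[OF fin H L HL]
    by (auto elim: dvdE)
  have "card H * q dvd card H * p" using card_subgroup_dvd[OF fin L K LK] q card_K
    by (simp add: mult.commute)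
  moreover have "card H > 0" using fin by (rule subgroup.finite_imp_card_positive[OF H])
  ultimately have "q dvd p" by simp
  then consider "q = 1" | "q = p" using p by (auto simp: prime_nat_iff)
  then show ?thesis
  proof cases
    case 1
    then have "H = ?L" using q HL fin_K LK by (intro card_subset_eq) (auto intro: finite_subset)
    then show ?thesis using d dL by blast
  next
    case 2
    then show ?thesis using q card_K LK fin_K by (intro card_subset_eq) (auto simp: mult.commute)
  qed
qed

end

section \<open>Elementary abelian and abelian normal subgroups\<close>

locale elementary_abelian_subgroup = group G for G (structure) +
  fixes A and p :: nat
  assumes elementary_abelian: "elementary_abelian G p A"
    and prime: "Factorial_Ring.prime p"
begin

lemma subgroup_A: "subgroup A G"
  using elementary_abelian unfolding elementary_abelian_def by blast

lemma mem_carrier [simp]: "x \<in> A \<Longrightarrow> x \<in> carrier G"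
  using subgroup.mem_carrier[OF subgroup_A] .

lemma commute: "x \<in> A \<Longrightarrow> y \<in> A \<Longrightarrow> x \<otimes> y = y \<otimes> x"
  using elementary_abelian comm_monoid.m_comm[OF comm_group.axioms(1), of "G\<lparr>carrier := A\<rparr>" x y]
  unfolding elementary_abelian_def by simp

lemma pow_p_eq_one: "x \<in> A \<Longrightarrow> x [^] p = \<one>"
  using elementary_abelian unfolding elementary_abelian_def by blast

lemma pow_mod: "x \<in> A \<Longrightarrow> x [^] (k::nat) = x [^] (k mod p)"
proof -
  assume x: "x \<in> A"
  have "x [^] k = (x [^] p) [^] (k div p) \<otimes> x [^] (k mod p)"
    using x by (simp add: nat_pow_pow nat_pow_mult)
  then show ?thesis using x by (simp add: pow_p_eq_one)
qed

lemma inv_eq_pow: "x \<in> A \<Longrightarrow> inv x = x [^] (p - 1)"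
proof -
  assume x: "x \<in> A"
  have "x [^] (p - 1) \<otimes> x = x [^] p"
    using prime_gt_1_nat[OF prime] x by (simp add: nat_pow_Suc[symmetric] del: nat_pow_Suc)
  then show ?thesis using x by (simp add: pow_p_eq_one inv_equality)
qed

lemma mem_if_pow_mem:
  assumes x: "x \<in> A" and H: "subgroup H G" and xj: "x [^] (j::nat) \<in> H" and j: "\<not> p dvd j"
  shows "x \<in> H"
proof -
  have "j \<noteq> 0" using j by (metis dvd_0_right)
  moreover have "gcd j p = 1" using prime j
    by (metis prime_imp_coprime coprime_commute coprime_iff_gcd_eq_1)
  ultimately obtain u v where uv: "j * u = p * v + 1" using bezout_nat[of j p] by auto
  have "x [^] (j * u) = (x [^] p) [^] v \<otimes> x" using x
    by (simp add: uv nat_pow_mult[symmetric] nat_pow_pow)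
  then have "x [^] (j * u) = x" using x by (simp add: pow_p_eq_one)
  then have "x = (x [^] j) [^] u" using x by (simp add: nat_pow_pow)
  then show ?thesis using subgroup_nat_pow_closed[OF H xj, of u] by metis
qed

lemma subgroup_pow_mult:
  assumes x: "x \<in> A" and H: "subgroup H G" "H \<subseteq> A"
  shows "subgroup {x [^] (i::nat) \<otimes> h | i h. h \<in> H} G" (is "subgroup ?S G")
proof (rule subgroupI)
  have hA: "h \<in> A" if "h \<in> H" for h using that H(2) by blast
  then show "?S \<subseteq> carrier G" using x by auto
  have "\<one> = x [^] (0::nat) \<otimes> \<one>" by simp
  then show "?S \<noteq> {}" using subgroup.one_closed[OF H(1)] by blast
next
  fix s assume "s \<in> ?S"
  then obtain i h where s: "s = x [^] (i::nat) \<otimes> h" and h: "h \<in> H" by blast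
  have hA: "h \<in> A" using h H(2) by blast
  have "inv s = inv (x [^] i) \<otimes> inv h"
    using x hA subgroup_nat_pow_closed[OF subgroup_A x]
    by (simp add: s inv_mult_group commute subgroup.m_inv_closed[OF subgroup_A])
  also have "\<dots> = x [^] (i * (p - 1)) \<otimes> inv h"
    using x subgroup_nat_pow_closed[OF subgroup_A x] by (simp add: inv_eq_pow nat_pow_pow)
  finally show "inv s \<in> ?S" using subgroup.m_inv_closed[OF H(1) h] by blast
next
  fix s t assume "s \<in> ?S" "t \<in> ?S"
  then obtain i h j k where s: "s = x [^] (i::nat) \<otimes> h" and h: "h \<in> H"
    and t: "t = x [^] (j::nat) \<otimes> k" and k: "k \<in> H" by blast
  have hA: "h \<in> A" "k \<in> A" using h k H(2) by blast+
  have "s \<otimes> t = x [^] i \<otimes> (h \<otimes> x [^] j) \<otimes> k"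
    using x hA by (simp add: s t m_assoc)
  also have "\<dots> = x [^] (i + j) \<otimes> (h \<otimes> k)"
    using x hA subgroup_nat_pow_closed[OF subgroup_A x]
    by (simp add: commute[of h] m_assoc nat_pow_mult[symmetric])
  finally show "s \<otimes> t \<in> ?S" using subgroup.m_closed[OF H(1) h k] by blast
qed

lemma generate_insert_eq:
  assumes x: "x \<in> A" and H: "subgroup H G" "H \<subseteq> A"
  shows "generate G (insert x H) = (\<lambda>(i, h). x [^] i \<otimes> h) ` ({..<p} \<times> H)"
proof
  let ?S = "{x [^] (i::nat) \<otimes> h | i h. h \<in> H}"
  have "insert x H \<subseteq> ?S"
  proof
    fix y assume "y \<in> insert x H"
    moreover have "x = x [^] (1::nat) \<otimes> \<one>" using x by simp
    moreover have "h = x [^] (0::nat) \<otimes> h" if "h \<in> H" for h using that H(2) by auto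
    ultimately show "y \<in> ?S" using subgroup.one_closed[OF H(1)] by blast
  qed
  then have "generate G (insert x H) \<subseteq> ?S"
    by (rule generate_subgroup_incl[OF _ subgroup_pow_mult[OF x H]])
  moreover have "?S \<subseteq> (\<lambda>(i, h). x [^] i \<otimes> h) ` ({..<p} \<times> H)"
  proof
    fix s assume "s \<in> ?S"
    then obtain i h where "s = x [^] (i::nat) \<otimes> h" "h \<in> H" by blast
    moreover have "i mod p < p" using prime_gt_1_nat[OF prime] by simp
    ultimately show "s \<in> (\<lambda>(i, h). x [^] i \<otimes> h) ` ({..<p} \<times> H)"
      using pow_mod[OF x, of i] by force
  qed
  ultimately show "generate G (insert x H) \<subseteq> (\<lambda>(i, h). x [^] i \<otimes> h) ` ({..<p} \<times> H)" by blast
next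
  have gen: "subgroup (generate G (insert x H)) G"
    using x H by (intro generate_is_subgroup) auto
  have "x [^] i \<otimes> h \<in> generate G (insert x H)" if "h \<in> H" for i :: nat and h
    using that by (intro subgroup.m_closed[OF gen] subgroup_nat_pow_closed[OF gen])
      (auto intro: generate.incl)
  then show "(\<lambda>(i, h). x [^] i \<otimes> h) ` ({..<p} \<times> H) \<subseteq> generate G (insert x H)" by auto
qed

lemma finite_generate_insert:
  "x \<in> A \<Longrightarrow> subgroup H G \<Longrightarrow> H \<subseteq> A \<Longrightarrow> finite H \<Longrightarrow> finite (generate G (insert x H))"
  by (simp add: generate_insert_eq)

lemma card_generate_insert_le:
  assumes "x \<in> A" "subgroup H G" "H \<subseteq> A" "finite H"
  shows "card (generate G (insert x H)) \<le> p * card H"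
proof -
  have "card (generate G (insert x H)) \<le> card ({..<p} \<times> H)"
    unfolding generate_insert_eq[OF assms(1-3)] by (rule card_image_le) (simp add: assms(4))
  then show ?thesis by (simp add: card_cartesian_product)
qed

lemma card_generate_insert2_le:
  assumes x: "x \<in> A" and y: "y \<in> A" and H: "subgroup H G" "H \<subseteq> A" "finite H"
  shows "card (generate G (insert x (insert y H))) \<le> p * (p * card H)"
proof -
  let ?K = "generate G (insert y H)"
  have K: "subgroup ?K G" "?K \<subseteq> A" "finite ?K"
    using y H by (auto intro!: generate_is_subgroup generate_subgroup_incl[OF _ subgroup_A]
        finite_generate_insert)
  have "generate G (insert x (insert y H)) \<subseteq> generate G (insert x ?K)"
    by (intro mono_generate) (auto intro: generate.incl)
  then have "card (generate G (insert x (insert y H))) \<le> card (generate G (insert x ?K))"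
    using finite_generate_insert[OF x K] by (rule card_mono[rotated])
  also have "\<dots> \<le> p * card ?K" using card_generate_insert_le[OF x K] .
  also have "\<dots> \<le> p * (p * card H)" using card_generate_insert_le[OF y H] by simp
  finally show ?thesis .
qed

lemma card_generate_singleton_le:
  assumes x: "x \<in> A"
  shows "card (generate G {x}) \<le> p"
proof -
  have one: "subgroup {\<one>} G" "{\<one>} \<subseteq> A"
    using triv_subgroup subgroup.one_closed[OF subgroup_A] by auto
  have "generate G {x} \<subseteq> generate G (insert x {\<one>})" by (rule mono_generate) blast
  then have "card (generate G {x}) \<le> card (generate G (insert x {\<one>}))"
    using finite_generate_insert[OF x one] by (rule card_mono[rotated]) simp
  also have "\<dots> \<le> p" using card_generate_insert_le[OF x one] by simp
  finally show ?thesis .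
qed

(* (i, j) is a kernel vector, nonzero mod p, of the symmetric matrix with rows (U, V) and (V, W),
   which therefore has rank at most one. *)
lemma cyclic_span_of_symmetric_relation:
  assumes U: "U \<in> A" and V: "V \<in> A" and W: "W \<in> A"
    and UV: "U [^] (i::nat) \<otimes> V [^] (j::nat) = \<one>" and VW: "V [^] i \<otimes> W [^] j = \<one>"
    and ij: "\<not> (p dvd i \<and> p dvd j)"
  shows "\<exists>t\<in>A. {U, V, W} \<subseteq> generate G {t}"
proof (cases "p dvd j")
  case False
  let ?T = "generate G {U}"
  have T: "subgroup ?T G" using U by (intro generate_is_subgroup) simp
  have UT: "U \<in> ?T" by (simp add: generate.incl)
  have "inv (U [^] i) = V [^] j"
    using UV U V by (intro inv_equality) (simp_all add: commute[of "V [^] j"]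
        subgroup_nat_pow_closed[OF subgroup_A])
  then have "V [^] j \<in> ?T"
    using subgroup.m_inv_closed[OF T subgroup_nat_pow_closed[OF T UT, of i]] by simp
  then have VT: "V \<in> ?T" using mem_if_pow_mem[OF V T _ False] by simp
  have "inv (V [^] i) = W [^] j"
    using VW V W by (intro inv_equality) (simp_all add: commute[of "W [^] j"]
        subgroup_nat_pow_closed[OF subgroup_A])
  then have "W [^] j \<in> ?T"
    using subgroup.m_inv_closed[OF T subgroup_nat_pow_closed[OF T VT, of i]] by simp
  then have "W \<in> ?T" using mem_if_pow_mem[OF W T _ False] by simp
  then show ?thesis using U UT VT by blast
next
  case True
  then have i: "\<not> p dvd i" using ij by blast
  have "V [^] j = \<one>" "W [^] j = \<one>" using pow_mod[OF V, of j] pow_mod[OF W, of j] True by simp_all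
  then have "U [^] i = \<one>" "V [^] i = \<one>" using UV VW U V by simp_all
  then have "U = \<one>" "V = \<one>"
    using mem_if_pow_mem[OF U triv_subgroup _ i] mem_if_pow_mem[OF V triv_subgroup _ i]
    by simp_all
  moreover have "\<one> \<in> generate G {W}" "W \<in> generate G {W}"
    by (auto intro: generate.one generate.incl)
  ultimately show ?thesis using W by blast
qed

end

locale abelian_normal_subgroup = group G for G (structure) +
  fixes A
  assumes normal: "A \<lhd> G"
    and commute: "x \<in> A \<Longrightarrow> y \<in> A \<Longrightarrow> x \<otimes> y = y \<otimes> x"
begin

lemma subgroup_A: "subgroup A G"
  using normal by (rule normal_imp_subgroup)

lemma mem_carrier [simp]: "x \<in> A \<Longrightarrow> x \<in> carrier G"
  using subgroup.mem_carrier[OF subgroup_A] .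

lemma left_commute:
  assumes "x \<in> A" "y \<in> A" "z \<in> carrier G"
  shows "x \<otimes> (y \<otimes> z) = y \<otimes> (x \<otimes> z)"
proof -
  have "x \<otimes> (y \<otimes> z) = (x \<otimes> y) \<otimes> z" using assms by (simp add: m_assoc)
  also have "\<dots> = (y \<otimes> x) \<otimes> z" by (simp only: commute[OF assms(1,2)])
  also have "\<dots> = y \<otimes> (x \<otimes> z)" using assms by (simp add: m_assoc)
  finally show ?thesis .
qed

lemma conj_inv_mem: "n \<in> A \<Longrightarrow> g \<in> carrier G \<Longrightarrow> g \<otimes> inv n \<otimes> inv g \<in> A"
  using normal.inv_op_closed2[OF normal] subgroup.m_inv_closed[OF subgroup_A] by blast

lemma commutator_mult_left:
  assumes m: "m \<in> A" and n: "n \<in> A" and g: "g \<in> carrier G"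
  shows "commutator G (m \<otimes> n) g = commutator G m g \<otimes> commutator G n g"
proof -
  define u where "u = g \<otimes> inv n \<otimes> inv g"
  define v where "v = g \<otimes> inv m \<otimes> inv g"
  have u: "u \<in> A" and v: "v \<in> A" unfolding u_def v_def using m n g by (simp_all add: conj_inv_mem)
  have "commutator G (m \<otimes> n) g = m \<otimes> n \<otimes> u \<otimes> v"
    unfolding u_def v_def commutator_def using m n g by (simp add: m_assoc inv_mult_group)
  moreover have "commutator G m g = m \<otimes> v" unfolding v_def commutator_def using m g
    by (simp add: m_assoc)
  moreover have "commutator G n g = n \<otimes> u" unfolding u_def commutator_def using n g
    by (simp add: m_assoc)
  ultimately show ?thesis using m n u v by (simp add: m_assoc commute left_commute)
qed

lemma commutator_pow_left:
  assumes n: "n \<in> A" and g: "g \<in> carrier G"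
  shows "commutator G (n [^] (k::nat)) g = commutator G n g [^] k"
proof (induction k)
  case (Suc k)
  have "n [^] k \<in> A" using subgroup_nat_pow_closed[OF subgroup_A n] .
  then show ?case using Suc n g by (simp add: commutator_mult_left)
qed (use g in simp)

lemma commutator_pow_mult_left:
  "y \<in> A \<Longrightarrow> m \<in> A \<Longrightarrow> x \<in> carrier G \<Longrightarrow>
   commutator G (y [^] (k::nat) \<otimes> m) x = commutator G y x [^] k \<otimes> commutator G m x"
  by (simp add: commutator_mult_left commutator_pow_left subgroup_nat_pow_closed[OF subgroup_A])

lemma subgroup_commutator_preimage:
  assumes T: "subgroup T G" and g: "g \<in> carrier G"
  shows "subgroup {n \<in> A. commutator G n g \<in> T} G"
proof (rule subgroupI)
  show "{n \<in> A. commutator G n g \<in> T} \<subseteq> carrier G" by auto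
  have "\<one> \<in> {n \<in> A. commutator G n g \<in> T}"
    using g subgroup.one_closed[OF T] subgroup.one_closed[OF subgroup_A] by simp
  then show "{n \<in> A. commutator G n g \<in> T} \<noteq> {}" by blast
next
  fix n assume n: "n \<in> {n \<in> A. commutator G n g \<in> T}"
  have n_inv: "inv n \<in> A" using n subgroup.m_inv_closed[OF subgroup_A] by blast
  have "commutator G (inv n) g \<otimes> commutator G n g = \<one>"
    using commutator_mult_left[OF n_inv _ g, of n] n g by simp
  then have "commutator G (inv n) g = inv (commutator G n g)"
    using n n_inv g by (simp add: inv_equality)
  then show "inv n \<in> {n \<in> A. commutator G n g \<in> T}"
    using n n_inv subgroup.m_inv_closed[OF T] by simp
next
  fix m n assume "m \<in> {n \<in> A. commutator G n g \<in> T}" "n \<in> {n \<in> A. commutator G n g \<in> T}"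
  then show "m \<otimes> n \<in> {n \<in> A. commutator G n g \<in> T}"
    using g subgroup.m_closed[OF T] subgroup.m_closed[OF subgroup_A]
    by (simp add: commutator_mult_left)
qed

lemma commutator_mem_generate:
  assumes T: "subgroup T G" and x: "x \<in> carrier G" and S: "S \<subseteq> A"
    and ST: "\<And>s. s \<in> S \<Longrightarrow> commutator G s x \<in> T" and n: "n \<in> generate G S"
  shows "commutator G n x \<in> T"
  using generate_subgroup_incl[OF _ subgroup_commutator_preimage[OF T x]] S ST n by blast

lemma commutator_commutator_swap:
  assumes a: "a \<in> carrier G" and b: "b \<in> carrier G" and ab: "commutator G a b \<in> A" and n: "n \<in> A"
  shows "commutator G (commutator G n a) b = commutator G (commutator G n b) a"
proof -
  have expand: "commutator G (commutator G n g) h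
      = n \<otimes> (g \<otimes> inv n \<otimes> inv g) \<otimes> ((h \<otimes> g) \<otimes> n \<otimes> inv (h \<otimes> g) \<otimes> (h \<otimes> inv n \<otimes> inv h))"
    if "g \<in> carrier G" "h \<in> carrier G" for g h
    using that n by (simp add: commutator_def m_assoc inv_mult_group)
  \<comment> \<open>conjugation by \<open>a \<otimes> b\<close> and by \<open>b \<otimes> a\<close> agree on \<open>A\<close>: they differ by \<open>[a, b] \<in> A\<close>\<close>
  have conj_ba: "(b \<otimes> a) \<otimes> n \<otimes> inv (b \<otimes> a) = (a \<otimes> b) \<otimes> n \<otimes> inv (a \<otimes> b)"
  proof -
    define y where "y = (b \<otimes> a) \<otimes> n \<otimes> inv (b \<otimes> a)"
    have y: "y \<in> A" unfolding y_def using normal.inv_op_closed2[OF normal] n a b by simp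
    have "a \<otimes> b = commutator G a b \<otimes> (b \<otimes> a)" unfolding commutator_def using a b
      by (simp add: m_assoc)
    then have "(a \<otimes> b) \<otimes> n \<otimes> inv (a \<otimes> b) = commutator G a b \<otimes> y \<otimes> inv (commutator G a b)"
      unfolding y_def using a b n by (simp add: m_assoc inv_mult_group)
    also have "\<dots> = y" using commute[OF ab y] y ab by (simp add: m_assoc)
    finally show ?thesis unfolding y_def by simp
  qed
  have conj: "g \<otimes> n \<otimes> inv g \<in> A" "g \<otimes> inv n \<otimes> inv g \<in> A" if "g \<in> carrier G" for g
    using that n normal.inv_op_closed2[OF normal] conj_inv_mem by auto
  have perm: "w \<otimes> x \<otimes> (y \<otimes> z) = w \<otimes> z \<otimes> (y \<otimes> x)" if "w \<in> A" "x \<in> A" "y \<in> A" "z \<in> A" for w x y z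
    using that by (simp add: m_assoc commute left_commute)
  show ?thesis unfolding expand[OF a b] expand[OF b a] conj_ba
    using a b by (intro perm n conj) auto
qed

end

section \<open>Two-generated metabelian groups\<close>

locale two_generated_metabelian = group G for G (structure) +
  fixes a b
  assumes a_closed: "a \<in> carrier G" and b_closed: "b \<in> carrier G"
    and generate_eq: "generate G (insert a (insert b (lower_central G 2))) = carrier G"
    and lower_central_2_commute:
      "x \<in> lower_central G 2 \<Longrightarrow> y \<in> lower_central G 2 \<Longrightarrow> x \<otimes> y = y \<otimes> x"
begin

sublocale derived: abelian_normal_subgroup G "lower_central G 2"
  by (simp add: abelian_normal_subgroup_def abelian_normal_subgroup_axioms_def is_group
      normal_lower_central lower_central_2_commute)

lemma generators_subset: "insert a (insert b (lower_central G 2)) \<subseteq> carrier G"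
  using a_closed b_closed lower_central_subset_carrier by blast

lemma lower_central_2_subset:
  "lower_central G 2 \<subseteq> generate G (insert (commutator G a b) (lower_central G 3))"
proof -
  let ?S = "generate G (insert (commutator G a b) (lower_central G 3))"
  have c: "commutator G a b \<in> lower_central G 2"
    using commutator_mem_lower_central[of a 0 b] a_closed b_closed by (simp add: numeral_2_eq_2)
  have "insert (commutator G a b) (lower_central G 3) \<subseteq> carrier G"
    using a_closed b_closed lower_central_subset_carrier by auto
  then have S: "subgroup ?S G" by (rule generate_is_subgroup)
  have "lower_central G 3 \<subseteq> lower_central G 2"
    using lower_central_Suc_subset[of 2] by simp
  then have "?S \<subseteq> lower_central G 2"
    using c by (intro generate_subgroup_incl subgroup_lower_central) auto
  moreover have "lower_central G 3 \<subseteq> ?S" by (auto intro: generate.incl)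
  ultimately have "?S \<lhd> G"
    using normal_if_between_lower_central[OF S, of 1] by (simp add: eval_nat_numeral)
  then show ?thesis
    using lower_central_2_subsetI[OF a_closed b_closed generate_eq] \<open>lower_central G 3 \<subseteq> ?S\<close>
    by (auto intro: generate.incl)
qed

lemma lower_central_subset_if_commutators_ab:
  assumes S: "S \<lhd> G"
    and comm: "\<And>h x. h \<in> lower_central G (Suc (Suc k)) \<Longrightarrow> x \<in> {a, b} \<Longrightarrow> commutator G h x \<in> S"
  shows "lower_central G (Suc (Suc (Suc k))) \<subseteq> S"
proof (rule lower_central_subset_if_generators[OF generators_subset generate_eq S])
  fix h x
  assume h: "h \<in> lower_central G (Suc (Suc k))" and x: "x \<in> insert a (insert b (lower_central G 2))"
  show "commutator G h x \<in> S"
  proof (cases "x \<in> {a, b}")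
    case True
    then show ?thesis using comm h by blast
  next
    case False
    then have "x \<in> lower_central G 2" using x by blast
    moreover have "h \<in> lower_central G 2" using h lower_central_antimono[of 2 "Suc (Suc k)"] by auto
    ultimately have "commutator G h x = \<one>"
      using lower_central_2_commute lower_central_subset_carrier
      by (subst commutator_eq_one_iff) blast+
    then show ?thesis using subgroup.one_closed[OF normal_imp_subgroup[OF S]] by simp
  qed
qed

lemma lower_central_subset_generate_commutators:
  assumes Y: "Y \<subseteq> lower_central G (Suc (Suc k))"
    and gen: "lower_central G (Suc (Suc k)) \<subseteq> generate G (Y \<union> lower_central G (Suc (Suc (Suc k))))"
  shows "lower_central G (Suc (Suc (Suc k))) \<subseteq>
    generate G ((\<Union>y\<in>Y. {commutator G y a, commutator G y b})
      \<union> lower_central G (Suc (Suc (Suc (Suc k)))))"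
    (is "_ \<subseteq> ?T")
proof -
  let ?C = "\<Union>y\<in>Y. {commutator G y a, commutator G y b}"
  have C: "?C \<subseteq> lower_central G (Suc (Suc (Suc k)))"
    using Y commutator_mem_lower_central a_closed b_closed by blast
  have next_subset:
    "lower_central G (Suc (Suc (Suc (Suc k)))) \<subseteq> lower_central G (Suc (Suc (Suc k)))"
    by (rule lower_central_Suc_subset)
  have "?C \<union> lower_central G (Suc (Suc (Suc (Suc k)))) \<subseteq> carrier G"
    using C next_subset lower_central_subset_carrier by blast
  then have T: "subgroup ?T G" by (rule generate_is_subgroup)
  have C_T: "?C \<subseteq> ?T" and next_T: "lower_central G (Suc (Suc (Suc (Suc k)))) \<subseteq> ?T"
    by (auto intro: generate.incl)
  have "?T \<subseteq> lower_central G (Suc (Suc (Suc k)))"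
    using C next_subset by (intro generate_subgroup_incl subgroup_lower_central) auto
  then have normal_T: "?T \<lhd> G" using normal_if_between_lower_central[OF T next_T] by blast
  have derived: "Y \<union> lower_central G (Suc (Suc (Suc k))) \<subseteq> lower_central G 2"
    using Y lower_central_antimono[of 2 "Suc (Suc k)"]
      lower_central_antimono[of 2 "Suc (Suc (Suc k))"]
    by auto
  show ?thesis
  proof (rule lower_central_subset_if_commutators_ab[OF normal_T])
    fix h x assume h: "h \<in> lower_central G (Suc (Suc k))" and x: "x \<in> {a, b}"
    have x_closed: "x \<in> carrier G" using x a_closed b_closed by blast
    show "commutator G h x \<in> ?T"
    proof (rule derived.commutator_mem_generate[OF T x_closed derived])
      fix s assume "s \<in> Y \<union> lower_central G (Suc (Suc (Suc k)))"
      then show "commutator G s x \<in> ?T"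
        using C_T next_T x commutator_mem_lower_central[OF _ x_closed] by blast
    qed (use gen h in blast)
  qed
qed

end

locale class_four_group = group G for G (structure) +
  fixes p :: nat
  assumes prime: "Factorial_Ring.prime p"
    and order_eq: "order G = p ^ 7"
    and nilpotency_class: "nilpotency_class G 4"
    and derived_elementary_abelian: "elementary_abelian G p (lower_central G 2)"
    and card_derived: "card (lower_central G 2) = p ^ 5"
begin

sublocale elementary: elementary_abelian_subgroup G "lower_central G 2" p
  by (simp add: elementary_abelian_subgroup_def elementary_abelian_subgroup_axioms_def is_group
      derived_elementary_abelian prime)

lemma p_gt_1: "1 < p"
  using prime by (rule prime_gt_1_nat)

lemma card_carrier: "card (carrier G) = p ^ 7"
  using order_eq by (simp add: order_def)

lemma finite_carrier: "finite (carrier G)"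
  using card_carrier p_gt_1 by (intro card_ge_0_finite) simp

lemma finite_lower_central: "finite (lower_central G n)"
  using finite_carrier lower_central_subset_carrier by (rule finite_subset[rotated])

lemma lower_central_5_eq: "lower_central G 5 = {\<one>}"
  using nilpotency_class unfolding nilpotency_class_def by (simp add: eval_nat_numeral)

lemma lower_central_2_psubset: "lower_central G 2 \<subset> carrier G"
proof -
  have "lower_central G 2 \<noteq> carrier G" using card_derived card_carrier p_gt_1 by auto
  then show ?thesis using lower_central_subset_carrier by blast
qed

lemma finite_generate: "S \<subseteq> carrier G \<Longrightarrow> finite (generate G S)"
  using finite_subset[OF generate_incl finite_carrier] .

lemma lower_central_3_psubset: "lower_central G 3 \<subset> lower_central G 2"
  using lower_central_Suc_subset[of 2] nilpotency_class_lower_central_neq[OF nilpotency_class, of 1]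
  by (auto simp: eval_nat_numeral)

lemma lower_central_4_psubset: "lower_central G 4 \<subset> lower_central G 3"
  using lower_central_Suc_subset[of 3] nilpotency_class_lower_central_neq[OF nilpotency_class, of 2]
  by (auto simp: eval_nat_numeral)

lemma exists_generating_pair:
  assumes a: "a \<in> carrier G" "a \<notin> lower_central G 2"
  shows "\<exists>b\<in>carrier G. generate G (insert a (insert b (lower_central G 2))) = carrier G"
proof -
  let ?L = "generate G (insert a (lower_central G 2))"
  have L: "subgroup ?L G"
    using a lower_central_subset_carrier by (intro generate_is_subgroup) auto
  have "lower_central G 2 \<subseteq> ?L" "a \<in> ?L" by (auto intro: generate.incl)
  then have derived_L: "lower_central G 2 \<subset> ?L" using a by blast
  have "?L \<noteq> carrier G"
  proof
    assume "?L = carrier G"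
    then have "lower_central G 2 \<subseteq> lower_central G 3"
      using lower_central_2_subsetI[OF a(1) a(1) _ normal_lower_central[of 3]] a(1)
        subgroup.one_closed[OF subgroup_lower_central[of 3]] by simp
    then show False using lower_central_3_psubset by blast
  qed
  then obtain b where b: "b \<in> carrier G" "b \<notin> ?L" using subgroup.subset[OF L] by blast
  let ?M = "generate G (insert a (insert b (lower_central G 2)))"
  have M: "subgroup ?M G"
    using a b lower_central_subset_carrier by (intro generate_is_subgroup) auto
  have "?L \<subseteq> ?M" by (rule mono_generate) blast
  moreover have "b \<in> ?M" by (auto intro: generate.incl)
  ultimately have "?L \<subset> ?M" using b by blast
  then have "?M = carrier G"
    using psubgroup_chain_eq_carrier[OF finite_carrier prime subgroup_lower_central L M derived_L _
        card_derived] card_carrier by simp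
  then show ?thesis using b by blast
qed

lemma lower_central_4_subset_center: "lower_central G 4 \<subseteq> group_center G"
proof
  fix z assume z: "z \<in> lower_central G 4"
  have z_closed: "z \<in> carrier G" using z lower_central_subset_carrier by blast
  have "z \<otimes> g = g \<otimes> z" if g: "g \<in> carrier G" for g
  proof -
    have "commutator G z g \<in> lower_central G 5"
      using commutator_mem_lower_central[of z 3 g] z g by (simp add: eval_nat_numeral)
    then show ?thesis using lower_central_5_eq z_closed g by (simp add: commutator_eq_one_iff)
  qed
  then show "z \<in> group_center G" using z_closed by (simp add: group_center_def)
qed

lemma center_subset_lower_central_2: "group_center G \<subseteq> lower_central G 2"
proof
  fix z assume z: "z \<in> group_center G"
  have z_closed: "z \<in> carrier G" using z by (simp add: group_center_def)
  show "z \<in> lower_central G 2"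
  proof (rule ccontr)
    assume "z \<notin> lower_central G 2"
    then obtain w where w: "w \<in> carrier G"
      and gen: "generate G (insert z (insert w (lower_central G 2))) = carrier G"
      using exists_generating_pair z_closed by blast
    have "commutator G z w \<in> lower_central G 3"
      using commutator_center_left[OF z w] subgroup.one_closed[OF subgroup_lower_central] by simp
    then have "lower_central G 2 \<subseteq> lower_central G 3"
      using lower_central_2_subsetI[OF z_closed w gen normal_lower_central] by simp
    then show False using lower_central_3_psubset by blast
  qed
qed

end


locale class_four_generated = class_four_group +
  fixes a b
  assumes generators: "a \<in> carrier G" "b \<in> carrier G"
    "generate G (insert a (insert b (lower_central G 2))) = carrier G"

sublocale class_four_generated \<subseteq> two_generated_metabelian G a b
  using generators elementary.commute by unfold_locales auto

context class_four_generated
begin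

abbreviation "ab \<equiv> commutator G a b"
abbreviation "aba \<equiv> commutator G ab a"
abbreviation "abb \<equiv> commutator G ab b"
abbreviation "abaa \<equiv> commutator G aba a"
abbreviation "abab \<equiv> commutator G aba b"
abbreviation "abbb \<equiv> commutator G abb b"

lemma ab_mem: "ab \<in> lower_central G 2"
  using commutator_mem_lower_central[of a 0 b] a_closed b_closed by (simp add: numeral_2_eq_2)

lemma aba_mem: "aba \<in> lower_central G 3" and abb_mem: "abb \<in> lower_central G 3"
  using commutator_mem_lower_central[OF ab_mem[unfolded numeral_2_eq_2]] a_closed b_closed
  by (simp_all add: eval_nat_numeral)

lemma card_lower_central_3: "card (lower_central G 3) = p ^ 4"
proof -
  have "card (lower_central G 2) \<le> card (generate G (insert ab (lower_central G 3)))"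
    using lower_central_2_subset elementary.finite_generate_insert[OF ab_mem] finite_lower_central
      subgroup_lower_central lower_central_3_psubset by (intro card_mono) auto
  also have "\<dots> \<le> p * card (lower_central G 3)"
    using elementary.card_generate_insert_le[OF ab_mem] finite_lower_central
      subgroup_lower_central lower_central_3_psubset by auto
  finally have "p ^ 5 \<le> p * card (lower_central G 3)" using card_derived by simp
  moreover obtain i where i: "i < 5" "card (lower_central G 3) = p ^ i"
    using card_psubgroup_prime_power[OF finite_carrier prime subgroup_lower_central
        subgroup_lower_central lower_central_3_psubset card_derived] by blast
  ultimately have "p ^ 5 \<le> p ^ Suc i" by simp
  then have "5 \<le> Suc i" by (rule power_le_imp_le_exp[OF p_gt_1])
  then have "i = 4" using i(1) by simp
  then show ?thesis using i(2) by simp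
qed

lemma lower_central_3_subset:
  "lower_central G 3 \<subseteq> generate G (insert aba (insert abb (lower_central G 4)))"
  using lower_central_subset_generate_commutators[of "{ab}" 0] lower_central_2_subset ab_mem
  by (simp add: eval_nat_numeral)

lemma abba_eq: "commutator G abb a = abab"
  using derived.commutator_commutator_swap[OF a_closed b_closed ab_mem ab_mem] by simp

lemma abaa_mem: "abaa \<in> lower_central G 4"
  and abab_mem: "abab \<in> lower_central G 4"
  and abbb_mem: "abbb \<in> lower_central G 4"
  using commutator_mem_lower_central[of aba 2] commutator_mem_lower_central[of abb 2]
    aba_mem abb_mem a_closed b_closed by (simp_all add: eval_nat_numeral)

lemma card_lower_central_4_neq: "card (lower_central G 4) \<noteq> p ^ 3"
proof
  assume card_4: "card (lower_central G 4) = p ^ 3"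
  have sub43: "lower_central G 4 \<subseteq> lower_central G 3" using lower_central_4_psubset by blast
  obtain d where d: "d \<in> lower_central G 3" "d \<notin> lower_central G 4"
    using lower_central_4_psubset by blast
  have "card (lower_central G 3) = p * card (lower_central G 4)"
    using card_lower_central_3 card_4 by (simp add: power_Suc[symmetric])
  then have "generate G (insert d (lower_central G 4)) = lower_central G 3"
    using generate_insert_eq_if_index_prime[OF finite_carrier prime subgroup_lower_central
        subgroup_lower_central sub43 _ d] by simp
  then have "lower_central G 4 \<subseteq>
      generate G (insert (commutator G d a) (insert (commutator G d b) {\<one>}))"
    using lower_central_subset_generate_commutators[of "{d}" 1] d lower_central_5_eq
    by (simp add: eval_nat_numeral)
  moreover have d_comm:
    "commutator G d a \<in> lower_central G 2" "commutator G d b \<in> lower_central G 2"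
    using commutator_mem_lower_central[of d 2] d a_closed b_closed lower_central_antimono[of 2 4]
    by (auto simp: eval_nat_numeral)
  ultimately have "card (lower_central G 4) \<le>
      card (generate G (insert (commutator G d a) (insert (commutator G d b) {\<one>})))"
    using lower_central_subset_carrier by (intro card_mono finite_generate) auto
  also have "\<dots> \<le> p * (p * card {\<one>})"
    using d_comm triv_subgroup elementary.subgroup_A by (intro elementary.card_generate_insert2_le)
      (auto simp: subgroup.one_closed)
  finally have "p ^ 3 \<le> p ^ 2" using card_4 by (simp add: power2_eq_square)
  then show False using p_gt_1 by simp
qed

lemma card_lower_central_4: "card (lower_central G 4) = p ^ 2"
proof -
  have "card (lower_central G 3) \<le> card (generate G (insert aba (insert abb (lower_central G 4))))"
    using lower_central_3_subset aba_mem abb_mem lower_central_subset_carrier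
    by (intro card_mono finite_generate) auto
  also have "\<dots> \<le> p * (p * card (lower_central G 4))"
    using aba_mem abb_mem lower_central_antimono[of 2 3] lower_central_antimono[of 2 4]
    by (intro elementary.card_generate_insert2_le subgroup_lower_central finite_lower_central) auto
  finally have "p ^ 4 \<le> p * (p * card (lower_central G 4))" using card_lower_central_3 by simp
  obtain i where i: "i < 4" "card (lower_central G 4) = p ^ i"
    using card_psubgroup_prime_power[OF finite_carrier prime subgroup_lower_central
        subgroup_lower_central lower_central_4_psubset card_lower_central_3] by blast
  have "p ^ 4 \<le> p ^ Suc (Suc i)" using \<open>p ^ 4 \<le> _\<close> i(2) by simp
  then have "4 \<le> Suc (Suc i)" by (rule power_le_imp_le_exp[OF p_gt_1])
  moreover have "i \<noteq> 3" using i(2) card_lower_central_4_neq by auto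
  ultimately have "i = 2" using i(1) by simp
  then show ?thesis using i(2) by simp
qed

lemma lower_central_4_not_cyclic: "t \<in> lower_central G 2 \<Longrightarrow> \<not> lower_central G 4 \<subseteq> generate G {t}"
proof
  assume t: "t \<in> lower_central G 2" and sub: "lower_central G 4 \<subseteq> generate G {t}"
  have "card (lower_central G 4) \<le> card (generate G {t})"
    using sub t lower_central_subset_carrier by (intro card_mono finite_generate) auto
  also have "\<dots> \<le> p" using elementary.card_generate_singleton_le[OF t] .
  finally have "p ^ 2 \<le> p ^ 1" using card_lower_central_4 by simp
  then have "2 \<le> (1::nat)" by (rule power_le_imp_le_exp[OF p_gt_1])
  then show False by simp
qed

lemma lower_central_4_subset: "lower_central G 4 \<subseteq> generate G {abaa, abab, abbb}"
proof -
  have "lower_central G 4 \<subseteq>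
      generate G ((\<Union>y\<in>{aba, abb}. {commutator G y a, commutator G y b}) \<union> lower_central G 5)"
    using lower_central_subset_generate_commutators[of "{aba, abb}" 1] lower_central_3_subset
      aba_mem abb_mem by (simp add: eval_nat_numeral)
  also have "\<dots> \<subseteq> generate G {abaa, abab, abbb}"
    using a_closed b_closed aba_mem abb_mem lower_central_subset_carrier
    by (intro generate_subgroup_incl generate_is_subgroup)
      (auto simp: abba_eq lower_central_5_eq intro: generate.incl generate.one)
  finally show ?thesis .
qed

lemma lower_central_3_decomp:
  assumes "z \<in> lower_central G 3"
  obtains i j h where "h \<in> lower_central G 4" "z = aba [^] (i::nat) \<otimes> (abb [^] (j::nat) \<otimes> h)"
proof -
  have sub42: "lower_central G 4 \<subseteq> lower_central G 2"
    using lower_central_4_psubset lower_central_3_psubset by blast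
  let ?K = "generate G (insert abb (lower_central G 4))"
  have aba: "aba \<in> lower_central G 2" and abb: "abb \<in> lower_central G 2"
    using aba_mem abb_mem lower_central_3_psubset by blast+
  have "subgroup ?K G"
    using abb sub42 lower_central_subset_carrier by (intro generate_is_subgroup) auto
  moreover have "?K \<subseteq> lower_central G 2"
    using abb sub42 by (intro generate_subgroup_incl subgroup_lower_central) auto
  ultimately have K: "subgroup ?K G" "?K \<subseteq> lower_central G 2" .
  have "generate G (insert aba (insert abb (lower_central G 4))) \<subseteq> generate G (insert aba ?K)"
    by (intro mono_generate) (auto intro: generate.incl)
  then have "z \<in> generate G (insert aba ?K)" using assms lower_central_3_subset by blast
  then obtain i m where m: "m \<in> ?K" "z = aba [^] (i::nat) \<otimes> m"
    unfolding elementary.generate_insert_eq[OF aba K] by auto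
  then obtain j h where "h \<in> lower_central G 4" "m = abb [^] (j::nat) \<otimes> h"
    unfolding elementary.generate_insert_eq[OF abb subgroup_lower_central sub42] by auto
  then show ?thesis using m that by blast
qed

lemma center_subset_lower_central_3: "group_center G \<subseteq> lower_central G 3"
proof
  fix z assume z: "z \<in> group_center G"
  have sub32: "lower_central G 3 \<subseteq> lower_central G 2" using lower_central_3_psubset by blast
  have "z \<in> generate G (insert ab (lower_central G 3))"
    using z center_subset_lower_central_2 lower_central_2_subset by blast
  then obtain k m where m: "m \<in> lower_central G 3" and z_eq: "z = ab [^] (k::nat) \<otimes> m"
    unfolding elementary.generate_insert_eq[OF ab_mem subgroup_lower_central sub32] by auto
  have m_closed: "m \<in> carrier G" using m lower_central_subset_carrier by blast
  have pow_mem: "commutator G ab x [^] k \<in> lower_central G 4" if x: "x \<in> carrier G" for x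
  proof -
    have "commutator G ab x [^] k \<otimes> commutator G m x = \<one>"
      using commutator_center_left[OF z x] derived.commutator_pow_mult_left[OF ab_mem _ x, of m k]
        m sub32 z_eq by auto
    then have "inv (commutator G m x) = commutator G ab x [^] k"
      using m_closed x ab_mem lower_central_subset_carrier by (intro inv_equality) auto
    moreover have "commutator G m x \<in> lower_central G 4"
      using commutator_mem_lower_central[of m 2 x] m x by (simp add: eval_nat_numeral)
    ultimately show ?thesis using subgroup.m_inv_closed[OF subgroup_lower_central] by metis
  qed
  have "p dvd k"
  proof (rule ccontr)
    assume k: "\<not> p dvd k"
    have "aba \<in> lower_central G 4" "abb \<in> lower_central G 4"
      using elementary.mem_if_pow_mem[OF _ subgroup_lower_central pow_mem k] aba_mem abb_mem sub32
        a_closed b_closed by auto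
    then have "generate G (insert aba (insert abb (lower_central G 4))) \<subseteq> lower_central G 4"
      by (intro generate_subgroup_incl subgroup_lower_central) auto
    then show False using lower_central_3_subset lower_central_4_psubset by blast
  qed
  then have "ab [^] k = \<one>" using elementary.pow_mod[OF ab_mem, of k] by simp
  then show "z \<in> lower_central G 3" using z_eq m m_closed by simp
qed

lemma commutator_lower_central_3_decomp:
  assumes h: "h \<in> lower_central G 4" and x: "x \<in> carrier G"
  shows "commutator G (aba [^] (i::nat) \<otimes> (abb [^] (j::nat) \<otimes> h)) x
    = commutator G aba x [^] i \<otimes> commutator G abb x [^] j"
proof -
  have aba: "aba \<in> lower_central G 2" and abb: "abb \<in> lower_central G 2"
    and h2: "h \<in> lower_central G 2"
    using aba_mem abb_mem h lower_central_antimono[of 2 3] lower_central_antimono[of 2 4] by auto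
  have hj: "abb [^] j \<otimes> h \<in> lower_central G 2"
    using h2 subgroup_nat_pow_closed[OF elementary.subgroup_A abb]
    by (intro subgroup.m_closed[OF elementary.subgroup_A])
  have "commutator G h x \<in> lower_central G 5"
    using commutator_mem_lower_central[of h 3 x] h x by (simp add: eval_nat_numeral)
  then have "commutator G h x = \<one>" using lower_central_5_eq by simp
  then show ?thesis
    using x aba abb lower_central_subset_carrier
    by (simp add: derived.commutator_pow_mult_left[OF aba hj x]
        derived.commutator_pow_mult_left[OF abb h2 x] subsetD)
qed

lemma center_subset_lower_central_4: "group_center G \<subseteq> lower_central G 4"
proof
  fix z assume z: "z \<in> group_center G"
  have "z \<in> lower_central G 3" using center_subset_lower_central_3 z by blast
  then obtain i j h
    where h: "h \<in> lower_central G 4" and z_eq: "z = aba [^] (i::nat) \<otimes> (abb [^] (j::nat) \<otimes> h)"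
    by (rule lower_central_3_decomp)
  have rel_a: "abaa [^] i \<otimes> abab [^] j = \<one>"
    using commutator_lower_central_3_decomp[OF h a_closed] commutator_center_left[OF z a_closed]
    by (simp add: z_eq abba_eq)
  have rel_b: "abab [^] i \<otimes> abbb [^] j = \<one>"
    using commutator_lower_central_3_decomp[OF h b_closed] commutator_center_left[OF z b_closed]
    by (simp add: z_eq)
  have "p dvd i \<and> p dvd j"
  proof (rule ccontr)
    assume "\<not> (p dvd i \<and> p dvd j)"
    moreover have "abaa \<in> lower_central G 2" "abab \<in> lower_central G 2" "abbb \<in> lower_central G 2"
      using abaa_mem abab_mem abbb_mem lower_central_antimono[of 2 4] by auto
    ultimately obtain t where t: "t \<in> lower_central G 2" "{abaa, abab, abbb} \<subseteq> generate G {t}"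
      using elementary.cyclic_span_of_symmetric_relation rel_a rel_b by blast
    have "generate G {abaa, abab, abbb} \<subseteq> generate G {t}"
      using t lower_central_subset_carrier
      by (intro generate_subgroup_incl generate_is_subgroup) auto
    then show False using lower_central_4_subset lower_central_4_not_cyclic[OF t(1)] by blast
  qed
  then have "aba [^] i = \<one>" "abb [^] j = \<one>"
    using elementary.pow_mod aba_mem abb_mem lower_central_antimono[of 2 3] by auto
  moreover have "h \<in> carrier G" using h lower_central_subset_carrier by blast
  ultimately show "z \<in> lower_central G 4" using z_eq h by simp
qed

lemma center_eq_lower_central_4: "group_center G = lower_central G 4"
  using lower_central_4_subset_center center_subset_lower_central_4 by blast

end

theorem lemma4p1:
  fixes G (structure) and p :: nat
  assumes "group G"
    and "Factorial_Ring.prime p"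
    and "order G = p ^ 7"
    and "nilpotency_class G 4"
    and "elementary_abelian G p (lower_central G 2)"
    and "card (lower_central G 2) = p ^ 5"
  shows "group_center G = lower_central G 4 \<and> card (lower_central G 4) = p ^ 2"
proof -
  interpret class_four_group G p
    using assms by (simp add: class_four_group_def class_four_group_axioms_def)
  obtain a where a: "a \<in> carrier G" "a \<notin> lower_central G 2"
    using lower_central_2_psubset by blast
  then obtain b
    where "b \<in> carrier G" "generate G (insert a (insert b (lower_central G 2))) = carrier G"
    using exists_generating_pair by blast
  then interpret class_four_generated G p a b
    using a
    by (simp add: class_four_generated_def class_four_generated_axioms_def class_four_group_axioms)
  show ?thesis using center_eq_lower_central_4 card_lower_central_4 by simp
qed

end
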